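(* Let $\mathbf K$ be an M$\Delta$C, let $\operatorname{Rad}\mathbf K$ be its prime radical and $\mathbf N=\{A\in\mathbf K: A^{\otimes n}\cong0\text{ for some }n\ge1\}$. Then: (a) $\operatorname{Rad}\mathbf K\subseteq\mathbf N$; (b) if $\mathbf K$ has at least one completely prime ideal, then $\operatorname{Rad}\mathbf K\subseteq\mathbf N\subseteq\operatorname{CP\text{-}Rad}\mathbf K$; (c) if $\mathbf K$ is symmetric monoidal, then $\operatorname{Rad}\mathbf K=\mathbf N=\operatorname{CP\text{-}Rad}\mathbf K$.
   Context: M$\Delta$C: triangulated category with monoidal structure $(\otimes,\mathbf 1)$, $\otimes$ exact in each variable. Thick ideal: full triangulated subcategory closed under summands and two-sided tensoring with arbitrary objects. A prime ideal is a proper thick ideal $\mathbf P$ with $\mathbf I\otimes\mathbf J\subseteq\mathbf P\Rightarrow\mathbf I\subseteq\mathbf P$ or $\mathbf J\subseteq\mathbf P$ for thick ideals $\mathbf I,\mathbf J$; the prime radical $\operatorname{Rad}\mathbf K$ is the intersection of all prime ideals. A completely prime ideal is a proper thick ideal $\mathbf P$ such that $A\otimes B\in\mathbf P$ implies $A\in\mathbf P$ or $B\in\mathbf P$; $\operatorname{CP\text{-}Rad}\mathbf K$ is the intersection of all completely prime ideals. *)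

theory Defs
  imports Main
begin

text \<open>Morphisms live in a type 'm, objects in 'o;
  Hom X Y is the set of morphisms X -> Y. cmp g f is the composite "g after f".
  Dist is the class of distinguished triangles X -f-> Y -g-> Z -h-> shO X.
  asc A B C : (A*B)*C -> A*(B*C), lun A : 1*A -> A, run A : A*1 -> A.
  exL A B : (shO A)*B -> shO (A*B) and exR A B : A*(shO B) -> shO (A*B) are the structure
  isomorphisms making the tensor exact in each variable.\<close>

record ('o, 'm) mdc =
  Obj   :: "'o set"
  Hom   :: "'o \<Rightarrow> 'o \<Rightarrow> 'm set"
  cmp   :: "'m \<Rightarrow> 'm \<Rightarrow> 'm"
  idm   :: "'o \<Rightarrow> 'm"
  madd  :: "'m \<Rightarrow> 'm \<Rightarrow> 'm"
  mneg  :: "'m \<Rightarrow> 'm"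
  mzero :: "'o \<Rightarrow> 'o \<Rightarrow> 'm"
  shO   :: "'o \<Rightarrow> 'o"
  shM   :: "'m \<Rightarrow> 'm"
  Dist  :: "('o \<times> 'o \<times> 'o \<times> 'm \<times> 'm \<times> 'm) set"
  tenO  :: "'o \<Rightarrow> 'o \<Rightarrow> 'o"
  tenM  :: "'m \<Rightarrow> 'm \<Rightarrow> 'm"
  unitO :: "'o"
  asc   :: "'o \<Rightarrow> 'o \<Rightarrow> 'o \<Rightarrow> 'm"
  lun   :: "'o \<Rightarrow> 'm"
  run   :: "'o \<Rightarrow> 'm"
  exL   :: "'o \<Rightarrow> 'o \<Rightarrow> 'm"
  exR   :: "'o \<Rightarrow> 'o \<Rightarrow> 'm"

definition is_category :: "('o,'m) mdc \<Rightarrow> bool" where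
  "is_category K \<longleftrightarrow>
     (\<forall>X Y. (X \<notin> Obj K \<or> Y \<notin> Obj K) \<longrightarrow> Hom K X Y = {}) \<and>
     (\<forall>X \<in> Obj K. idm K X \<in> Hom K X X) \<and>
     (\<forall>X Y Z f g. f \<in> Hom K X Y \<longrightarrow> g \<in> Hom K Y Z \<longrightarrow> cmp K g f \<in> Hom K X Z) \<and>
     (\<forall>X Y f. f \<in> Hom K X Y \<longrightarrow> cmp K f (idm K X) = f \<and> cmp K (idm K Y) f = f) \<and>
     (\<forall>W X Y Z f g h. f \<in> Hom K W X \<longrightarrow> g \<in> Hom K X Y \<longrightarrow> h \<in> Hom K Y Z \<longrightarrow>
        cmp K h (cmp K g f) = cmp K (cmp K h g) f)"

definition is_iso :: "('o,'m) mdc \<Rightarrow> 'm \<Rightarrow> 'o \<Rightarrow> 'o \<Rightarrow> bool" where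
  "is_iso K f X Y \<longleftrightarrow> f \<in> Hom K X Y \<and>
     (\<exists>g \<in> Hom K Y X. cmp K g f = idm K X \<and> cmp K f g = idm K Y)"

definition isomorphic :: "('o,'m) mdc \<Rightarrow> 'o \<Rightarrow> 'o \<Rightarrow> bool" where
  "isomorphic K X Y \<longleftrightarrow> X \<in> Obj K \<and> Y \<in> Obj K \<and> (\<exists>f. is_iso K f X Y)"

definition is_preadditive :: "('o,'m) mdc \<Rightarrow> bool" where
  "is_preadditive K \<longleftrightarrow>
     (\<forall>X \<in> Obj K. \<forall>Y \<in> Obj K.
        mzero K X Y \<in> Hom K X Y \<and>
        (\<forall>f \<in> Hom K X Y. \<forall>g \<in> Hom K X Y. madd K f g \<in> Hom K X Y) \<and>
        (\<forall>f \<in> Hom K X Y. mneg K f \<in> Hom K X Y) \<and>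
        (\<forall>f \<in> Hom K X Y. \<forall>g \<in> Hom K X Y. \<forall>h \<in> Hom K X Y.
            madd K (madd K f g) h = madd K f (madd K g h)) \<and>
        (\<forall>f \<in> Hom K X Y. \<forall>g \<in> Hom K X Y. madd K f g = madd K g f) \<and>
        (\<forall>f \<in> Hom K X Y. madd K f (mzero K X Y) = f) \<and>
        (\<forall>f \<in> Hom K X Y. madd K f (mneg K f) = mzero K X Y)) \<and>
     (\<forall>X Y Z f f' g. f \<in> Hom K X Y \<longrightarrow> f' \<in> Hom K X Y \<longrightarrow> g \<in> Hom K Y Z \<longrightarrow>
        cmp K g (madd K f f') = madd K (cmp K g f) (cmp K g f')) \<and>
     (\<forall>X Y Z f g g'. f \<in> Hom K X Y \<longrightarrow> g \<in> Hom K Y Z \<longrightarrow> g' \<in> Hom K Y Z \<longrightarrow>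
        cmp K (madd K g g') f = madd K (cmp K g f) (cmp K g' f))"

definition is_zero_obj :: "('o,'m) mdc \<Rightarrow> 'o \<Rightarrow> bool" where
  "is_zero_obj K Z \<longleftrightarrow> Z \<in> Obj K \<and>
     (\<forall>X \<in> Obj K. Hom K Z X = {mzero K Z X} \<and> Hom K X Z = {mzero K X Z})"

definition is_biproduct :: "('o,'m) mdc \<Rightarrow> 'o \<Rightarrow> 'o \<Rightarrow> 'o \<Rightarrow> 'm \<Rightarrow> 'm \<Rightarrow> 'm \<Rightarrow> 'm \<Rightarrow> bool" where
  "is_biproduct K A B S i1 i2 p1 p2 \<longleftrightarrow>
     A \<in> Obj K \<and> B \<in> Obj K \<and> S \<in> Obj K \<and>
     i1 \<in> Hom K A S \<and> i2 \<in> Hom K B S \<and> p1 \<in> Hom K S A \<and> p2 \<in> Hom K S B \<and>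
     cmp K p1 i1 = idm K A \<and> cmp K p2 i2 = idm K B \<and>
     cmp K p2 i1 = mzero K A B \<and> cmp K p1 i2 = mzero K B A \<and>
     madd K (cmp K i1 p1) (cmp K i2 p2) = idm K S"

definition is_additive :: "('o,'m) mdc \<Rightarrow> bool" where
  "is_additive K \<longleftrightarrow> is_category K \<and> is_preadditive K \<and>
     (\<exists>Z. is_zero_obj K Z) \<and>
     (\<forall>A \<in> Obj K. \<forall>B \<in> Obj K. \<exists>S i1 i2 p1 p2. is_biproduct K A B S i1 i2 p1 p2)"

definition shift_ok :: "('o,'m) mdc \<Rightarrow> bool" where
  "shift_ok K \<longleftrightarrow>
     (\<forall>X \<in> Obj K. shO K X \<in> Obj K) \<and>
     (\<forall>X Y f. f \<in> Hom K X Y \<longrightarrow> shM K f \<in> Hom K (shO K X) (shO K Y)) \<and>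
     (\<forall>X \<in> Obj K. shM K (idm K X) = idm K (shO K X)) \<and>
     (\<forall>X Y Z f g. f \<in> Hom K X Y \<longrightarrow> g \<in> Hom K Y Z \<longrightarrow>
        shM K (cmp K g f) = cmp K (shM K g) (shM K f)) \<and>
     (\<forall>X Y f g. f \<in> Hom K X Y \<longrightarrow> g \<in> Hom K X Y \<longrightarrow>
        shM K (madd K f g) = madd K (shM K f) (shM K g)) \<and>
     (\<forall>X \<in> Obj K. \<forall>Y \<in> Obj K. bij_betw (shM K) (Hom K X Y) (Hom K (shO K X) (shO K Y))) \<and>
     (\<forall>Y \<in> Obj K. \<exists>X \<in> Obj K. isomorphic K (shO K X) Y)"

definition tri_typed :: "('o,'m) mdc \<Rightarrow> 'o \<Rightarrow> 'o \<Rightarrow> 'o \<Rightarrow> 'm \<Rightarrow> 'm \<Rightarrow> 'm \<Rightarrow> bool" where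
  "tri_typed K X Y Z f g h \<longleftrightarrow> f \<in> Hom K X Y \<and> g \<in> Hom K Y Z \<and> h \<in> Hom K Z (shO K X)"

definition is_triangulated :: "('o,'m) mdc \<Rightarrow> bool" where
  "is_triangulated K \<longleftrightarrow> is_additive K \<and> shift_ok K \<and>
     \<comment> \<open>distinguished triangles are triangles\<close>
     (\<forall>X Y Z f g h. (X,Y,Z,f,g,h) \<in> Dist K \<longrightarrow> tri_typed K X Y Z f g h) \<and>
     \<comment> \<open>TR1: X = X -> 0 -> shift X is distinguished\<close>
     (\<forall>X Z. X \<in> Obj K \<longrightarrow> is_zero_obj K Z \<longrightarrow>
        (X, X, Z, idm K X, mzero K X Z, mzero K Z (shO K X)) \<in> Dist K) \<and>
     \<comment> \<open>TR1: closed under isomorphisms of triangles\<close>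
     (\<forall>X Y Z f g h X' Y' Z' f' g' h' a b c.
        (X,Y,Z,f,g,h) \<in> Dist K \<longrightarrow> tri_typed K X' Y' Z' f' g' h' \<longrightarrow>
        is_iso K a X X' \<longrightarrow> is_iso K b Y Y' \<longrightarrow> is_iso K c Z Z' \<longrightarrow>
        cmp K b f = cmp K f' a \<longrightarrow> cmp K c g = cmp K g' b \<longrightarrow>
        cmp K (shM K a) h = cmp K h' c \<longrightarrow>
        (X',Y',Z',f',g',h') \<in> Dist K) \<and>
     \<comment> \<open>TR1: every morphism extends to a distinguished triangle\<close>
     (\<forall>X Y f. f \<in> Hom K X Y \<longrightarrow> (\<exists>Z g h. (X,Y,Z,f,g,h) \<in> Dist K)) \<and>
     \<comment> \<open>TR2: rotation\<close>
     (\<forall>X Y Z f g h. f \<in> Hom K X Y \<longrightarrow>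
        ((X,Y,Z,f,g,h) \<in> Dist K \<longleftrightarrow> (Y, Z, shO K X, g, h, mneg K (shM K f)) \<in> Dist K)) \<and>
     \<comment> \<open>TR3: morphisms of triangles\<close>
     (\<forall>X Y Z f g h X' Y' Z' f' g' h' a b.
        (X,Y,Z,f,g,h) \<in> Dist K \<longrightarrow> (X',Y',Z',f',g',h') \<in> Dist K \<longrightarrow>
        a \<in> Hom K X X' \<longrightarrow> b \<in> Hom K Y Y' \<longrightarrow> cmp K b f = cmp K f' a \<longrightarrow>
        (\<exists>c \<in> Hom K Z Z'. cmp K c g = cmp K g' b \<and> cmp K h' c = cmp K (shM K a) h)) \<and>
     \<comment> \<open>TR4: octahedral axiom\<close>
     (\<forall>X Y Z f g Z' u u' X' v v' Y' w w'.
        f \<in> Hom K X Y \<longrightarrow> g \<in> Hom K Y Z \<longrightarrow>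
        (X, Y, Z', f, u, u') \<in> Dist K \<longrightarrow>
        (Y, Z, X', g, v, v') \<in> Dist K \<longrightarrow>
        (X, Z, Y', cmp K g f, w, w') \<in> Dist K \<longrightarrow>
        (\<exists>a \<in> Hom K Z' Y'. \<exists>b \<in> Hom K Y' X'.
           (Z', Y', X', a, b, cmp K (shM K u) v') \<in> Dist K \<and>
           cmp K a u = cmp K w g \<and> cmp K w' a = u' \<and>
           cmp K b w = v \<and> cmp K v' b = cmp K (shM K f) w'))"

definition is_monoidal :: "('o,'m) mdc \<Rightarrow> bool" where
  "is_monoidal K \<longleftrightarrow>
     unitO K \<in> Obj K \<and>
     (\<forall>X \<in> Obj K. \<forall>Y \<in> Obj K. tenO K X Y \<in> Obj K) \<and>
     (\<forall>X Y X' Y' f f'. f \<in> Hom K X Y \<longrightarrow> f' \<in> Hom K X' Y' \<longrightarrow>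
        tenM K f f' \<in> Hom K (tenO K X X') (tenO K Y Y')) \<and>
     (\<forall>X \<in> Obj K. \<forall>Y \<in> Obj K. tenM K (idm K X) (idm K Y) = idm K (tenO K X Y)) \<and>
     (\<forall>X Y Z X' Y' Z' f g f' g'. f \<in> Hom K X Y \<longrightarrow> g \<in> Hom K Y Z \<longrightarrow>
        f' \<in> Hom K X' Y' \<longrightarrow> g' \<in> Hom K Y' Z' \<longrightarrow>
        tenM K (cmp K g f) (cmp K g' f') = cmp K (tenM K g g') (tenM K f f')) \<and>
     \<comment> \<open>associator: natural isomorphism\<close>
     (\<forall>A \<in> Obj K. \<forall>B \<in> Obj K. \<forall>C \<in> Obj K.
        is_iso K (asc K A B C) (tenO K (tenO K A B) C) (tenO K A (tenO K B C))) \<and>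
     (\<forall>X Y Z X' Y' Z' f g h. f \<in> Hom K X X' \<longrightarrow> g \<in> Hom K Y Y' \<longrightarrow> h \<in> Hom K Z Z' \<longrightarrow>
        cmp K (asc K X' Y' Z') (tenM K (tenM K f g) h) =
        cmp K (tenM K f (tenM K g h)) (asc K X Y Z)) \<and>
     \<comment> \<open>unitors: natural isomorphisms\<close>
     (\<forall>A \<in> Obj K. is_iso K (lun K A) (tenO K (unitO K) A) A \<and>
                   is_iso K (run K A) (tenO K A (unitO K)) A) \<and>
     (\<forall>X Y f. f \<in> Hom K X Y \<longrightarrow>
        cmp K (lun K Y) (tenM K (idm K (unitO K)) f) = cmp K f (lun K X) \<and>
        cmp K (run K Y) (tenM K f (idm K (unitO K))) = cmp K f (run K X)) \<and>
     \<comment> \<open>pentagon\<close>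
     (\<forall>A \<in> Obj K. \<forall>B \<in> Obj K. \<forall>C \<in> Obj K. \<forall>D \<in> Obj K.
        cmp K (tenM K (idm K A) (asc K B C D))
          (cmp K (asc K A (tenO K B C) D) (tenM K (asc K A B C) (idm K D)))
        = cmp K (asc K A B (tenO K C D)) (asc K (tenO K A B) C D)) \<and>
     \<comment> \<open>triangle identity\<close>
     (\<forall>A \<in> Obj K. \<forall>B \<in> Obj K.
        cmp K (tenM K (idm K A) (lun K B)) (asc K A (unitO K) B)
        = tenM K (run K A) (idm K B))"

definition tensor_exact :: "('o,'m) mdc \<Rightarrow> bool" where
  "tensor_exact K \<longleftrightarrow>
     (\<forall>X Y X' Y' f f' g. f \<in> Hom K X Y \<longrightarrow> f' \<in> Hom K X Y \<longrightarrow> g \<in> Hom K X' Y' \<longrightarrow>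
        tenM K (madd K f f') g = madd K (tenM K f g) (tenM K f' g) \<and>
        tenM K g (madd K f f') = madd K (tenM K g f) (tenM K g f')) \<and>
     (\<forall>A \<in> Obj K. \<forall>X \<in> Obj K.
        is_iso K (exL K X A) (tenO K (shO K X) A) (shO K (tenO K X A)) \<and>
        is_iso K (exR K A X) (tenO K A (shO K X)) (shO K (tenO K A X))) \<and>
     (\<forall>A \<in> Obj K. \<forall>X Y f. f \<in> Hom K X Y \<longrightarrow>
        cmp K (exL K Y A) (tenM K (shM K f) (idm K A)) =
          cmp K (shM K (tenM K f (idm K A))) (exL K X A) \<and>
        cmp K (exR K A Y) (tenM K (idm K A) (shM K f)) =
          cmp K (shM K (tenM K (idm K A) f)) (exR K A X)) \<and>
     (\<forall>A \<in> Obj K. \<forall>X Y Z f g h. (X,Y,Z,f,g,h) \<in> Dist K \<longrightarrow>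
        (tenO K X A, tenO K Y A, tenO K Z A, tenM K f (idm K A), tenM K g (idm K A),
           cmp K (exL K X A) (tenM K h (idm K A))) \<in> Dist K \<and>
        (tenO K A X, tenO K A Y, tenO K A Z, tenM K (idm K A) f, tenM K (idm K A) g,
           cmp K (exR K A X) (tenM K (idm K A) h)) \<in> Dist K)"

definition is_MDC :: "('o,'m) mdc \<Rightarrow> bool" where
  "is_MDC K \<longleftrightarrow> is_triangulated K \<and> is_monoidal K \<and> tensor_exact K"

definition is_symmetric :: "('o,'m) mdc \<Rightarrow> ('o \<Rightarrow> 'o \<Rightarrow> 'm) \<Rightarrow> bool" where
  "is_symmetric K br \<longleftrightarrow>
     (\<forall>A \<in> Obj K. \<forall>B \<in> Obj K. is_iso K (br A B) (tenO K A B) (tenO K B A) \<and>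
        cmp K (br B A) (br A B) = idm K (tenO K A B)) \<and>
     (\<forall>X Y X' Y' f g. f \<in> Hom K X X' \<longrightarrow> g \<in> Hom K Y Y' \<longrightarrow>
        cmp K (br X' Y') (tenM K f g) = cmp K (tenM K g f) (br X Y)) \<and>
     (\<forall>A \<in> Obj K. \<forall>B \<in> Obj K. \<forall>C \<in> Obj K.
        cmp K (asc K B C A) (cmp K (br A (tenO K B C)) (asc K A B C))
        = cmp K (tenM K (idm K B) (br A C)) (cmp K (asc K B A C) (tenM K (br A B) (idm K C))))"

definition thick_ideal :: "('o,'m) mdc \<Rightarrow> 'o set \<Rightarrow> bool" where
  "thick_ideal K P \<longleftrightarrow> P \<subseteq> Obj K \<and>
     (\<exists>Z \<in> P. is_zero_obj K Z) \<and>
     (\<forall>X Y. X \<in> P \<longrightarrow> isomorphic K X Y \<longrightarrow> Y \<in> P) \<and>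
     (\<forall>X \<in> Obj K. X \<in> P \<longleftrightarrow> shO K X \<in> P) \<and>
     (\<forall>X Y Z f g h. (X,Y,Z,f,g,h) \<in> Dist K \<longrightarrow> X \<in> P \<longrightarrow> Y \<in> P \<longrightarrow> Z \<in> P) \<and>
     (\<forall>A B S i1 i2 p1 p2. is_biproduct K A B S i1 i2 p1 p2 \<longrightarrow> S \<in> P \<longrightarrow> A \<in> P) \<and>
     (\<forall>A \<in> P. \<forall>B \<in> Obj K. tenO K A B \<in> P \<and> tenO K B A \<in> P)"

definition ideal_tensor :: "('o,'m) mdc \<Rightarrow> 'o set \<Rightarrow> 'o set \<Rightarrow> 'o set" where
  "ideal_tensor K I J = {tenO K A B | A B. A \<in> I \<and> B \<in> J}"

definition prime_ideal :: "('o,'m) mdc \<Rightarrow> 'o set \<Rightarrow> bool" where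
  "prime_ideal K P \<longleftrightarrow> thick_ideal K P \<and> P \<noteq> Obj K \<and>
     (\<forall>I J. thick_ideal K I \<longrightarrow> thick_ideal K J \<longrightarrow> ideal_tensor K I J \<subseteq> P \<longrightarrow>
        I \<subseteq> P \<or> J \<subseteq> P)"

definition completely_prime_ideal :: "('o,'m) mdc \<Rightarrow> 'o set \<Rightarrow> bool" where
  "completely_prime_ideal K P \<longleftrightarrow> thick_ideal K P \<and> P \<noteq> Obj K \<and>
     (\<forall>A \<in> Obj K. \<forall>B \<in> Obj K. tenO K A B \<in> P \<longrightarrow> A \<in> P \<or> B \<in> P)"

definition prime_radical :: "('o,'m) mdc \<Rightarrow> 'o set" where
  "prime_radical K = {A \<in> Obj K. \<forall>P. prime_ideal K P \<longrightarrow> A \<in> P}"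

definition cp_radical :: "('o,'m) mdc \<Rightarrow> 'o set" where
  "cp_radical K = {A \<in> Obj K. \<forall>P. completely_prime_ideal K P \<longrightarrow> A \<in> P}"

primrec tpow :: "('o,'m) mdc \<Rightarrow> 'o \<Rightarrow> nat \<Rightarrow> 'o" where
  "tpow K A 0 = unitO K"
| "tpow K A (Suc n) = tenO K A (tpow K A n)"

definition nilpotent_objs :: "('o,'m) mdc \<Rightarrow> 'o set" where
  "nilpotent_objs K = {A \<in> Obj K. \<exists>n\<ge>1. \<exists>Z. is_zero_obj K Z \<and> isomorphic K (tpow K A n) Z}"

end

theory Submission
  imports Defs
begin

text \<open>If \<open>A\<close> is not nilpotent, the zero objects form a thick ideal containing no tensor power
  \<open>A\<^sup>n\<close> (\<open>n \<ge> 1\<close>), and Zorn's lemma enlarges it to a thick ideal maximal with this property.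
  Exactly as for the nilradical of a commutative ring, such an ideal is prime, and it misses \<open>A\<close>;
  hence \<open>Rad K \<subseteq> N\<close>. A completely prime ideal is proper, so it misses the unit \<open>A\<^sup>0\<close>, and then
  \<open>A\<^sup>n \<cong> 0\<close> in it forces \<open>A\<close> into it; hence \<open>N \<subseteq> CP-Rad K\<close>. With a braiding every
  prime ideal is completely prime, which closes the chain of inclusions.\<close>

section \<open>Additive and triangulated categories\<close>

locale triangulated_cat =
  fixes K :: "('o, 'm) mdc"
  assumes triangulated: "is_triangulated K"
begin

lemma additive: "is_additive K"
  using triangulated unfolding is_triangulated_def by blast

lemma category: "is_category K"
  using additive unfolding is_additive_def by blast

lemma preadditive: "is_preadditive K"
  using additive unfolding is_additive_def by blast

lemma ex_zero_obj: "\<exists>Z. is_zero_obj K Z"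
  using additive unfolding is_additive_def by blast

lemma hom_objs: "f \<in> Hom K X Y \<Longrightarrow> X \<in> Obj K \<and> Y \<in> Obj K"
  using category unfolding is_category_def by blast

lemma id_in_hom: "X \<in> Obj K \<Longrightarrow> idm K X \<in> Hom K X X"
  using category unfolding is_category_def by blast

lemma comp_in_hom: "f \<in> Hom K X Y \<Longrightarrow> g \<in> Hom K Y Z \<Longrightarrow> cmp K g f \<in> Hom K X Z"
  using category unfolding is_category_def by blast

lemma comp_id_right: "f \<in> Hom K X Y \<Longrightarrow> cmp K f (idm K X) = f"
  using category unfolding is_category_def by blast

lemma comp_id_left: "f \<in> Hom K X Y \<Longrightarrow> cmp K (idm K Y) f = f"
  using category unfolding is_category_def by blast

lemma comp_assoc:
  "f \<in> Hom K W X \<Longrightarrow> g \<in> Hom K X Y \<Longrightarrow> h \<in> Hom K Y Z \<Longrightarrow>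
   cmp K h (cmp K g f) = cmp K (cmp K h g) f"
  using category unfolding is_category_def by blast

lemma zero_in_hom: "X \<in> Obj K \<Longrightarrow> Y \<in> Obj K \<Longrightarrow> mzero K X Y \<in> Hom K X Y"
  using preadditive unfolding is_preadditive_def by meson

lemma add_assoc:
  "f \<in> Hom K X Y \<Longrightarrow> g \<in> Hom K X Y \<Longrightarrow> h \<in> Hom K X Y \<Longrightarrow>
   madd K (madd K f g) h = madd K f (madd K g h)"
  using preadditive hom_objs[of f X Y] unfolding is_preadditive_def by meson

lemma add_zero_right: "f \<in> Hom K X Y \<Longrightarrow> madd K f (mzero K X Y) = f"
  using preadditive hom_objs[of f X Y] unfolding is_preadditive_def by meson

lemma add_neg_right: "f \<in> Hom K X Y \<Longrightarrow> madd K f (mneg K f) = mzero K X Y"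
  using preadditive hom_objs[of f X Y] unfolding is_preadditive_def by meson

lemma neg_in_hom: "f \<in> Hom K X Y \<Longrightarrow> mneg K f \<in> Hom K X Y"
  using preadditive hom_objs[of f X Y] unfolding is_preadditive_def by meson

lemma comp_add_right:
  "f \<in> Hom K X Y \<Longrightarrow> g \<in> Hom K Y Z \<Longrightarrow> g' \<in> Hom K Y Z \<Longrightarrow>
   cmp K (madd K g g') f = madd K (cmp K g f) (cmp K g' f)"
  using preadditive unfolding is_preadditive_def by meson

lemma comp_add_left:
  "f \<in> Hom K X Y \<Longrightarrow> f' \<in> Hom K X Y \<Longrightarrow> g \<in> Hom K Y Z \<Longrightarrow>
   cmp K g (madd K f f') = madd K (cmp K g f) (cmp K g f')"
  using preadditive unfolding is_preadditive_def by meson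

lemma add_idem_eq_zero:
  assumes x: "x \<in> Hom K X Y" and idem: "madd K x x = x"
  shows "x = mzero K X Y"
proof -
  have "mzero K X Y = madd K (madd K x x) (mneg K x)"
    using add_neg_right[OF x] idem by simp
  also have "\<dots> = x"
    using add_assoc[OF x x neg_in_hom[OF x]] add_neg_right[OF x] add_zero_right[OF x] by simp
  finally show ?thesis by simp
qed

lemma add_zero_zero: "X \<in> Obj K \<Longrightarrow> Y \<in> Obj K \<Longrightarrow> madd K (mzero K X Y) (mzero K X Y) = mzero K X Y"
  using add_zero_right zero_in_hom by blast

lemma comp_zero_right:
  assumes f: "f \<in> Hom K Y W" and X: "X \<in> Obj K"
  shows "cmp K f (mzero K X Y) = mzero K X W"
proof -
  have z: "mzero K X Y \<in> Hom K X Y" using zero_in_hom X hom_objs[OF f] by blast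
  have "madd K (cmp K f (mzero K X Y)) (cmp K f (mzero K X Y)) = cmp K f (mzero K X Y)"
    using comp_add_left[OF z z f] add_zero_zero X hom_objs[OF f] by simp
  then show ?thesis using add_idem_eq_zero comp_in_hom[OF z f] by blast
qed

lemma comp_zero_left:
  assumes g: "g \<in> Hom K X Y" and W: "W \<in> Obj K"
  shows "cmp K (mzero K Y W) g = mzero K X W"
proof -
  have z: "mzero K Y W \<in> Hom K Y W" using zero_in_hom W hom_objs[OF g] by blast
  have "madd K (cmp K (mzero K Y W) g) (cmp K (mzero K Y W) g) = cmp K (mzero K Y W) g"
    using comp_add_right[OF g z z] add_zero_zero W hom_objs[OF g] by simp
  then show ?thesis using add_idem_eq_zero comp_in_hom[OF g z] by blast
qed

lemma zero_obj_hom_from: "is_zero_obj K Z \<Longrightarrow> f \<in> Hom K Z X \<Longrightarrow> f = mzero K Z X"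
  using hom_objs unfolding is_zero_obj_def by blast

lemma zero_obj_hom_to: "is_zero_obj K Z \<Longrightarrow> f \<in> Hom K X Z \<Longrightarrow> f = mzero K X Z"
  using hom_objs unfolding is_zero_obj_def by blast

lemma zero_obj_iff_id_eq_zero: "is_zero_obj K A \<longleftrightarrow> A \<in> Obj K \<and> idm K A = mzero K A A"
proof
  assume "is_zero_obj K A"
  then show "A \<in> Obj K \<and> idm K A = mzero K A A"
    using id_in_hom unfolding is_zero_obj_def by blast
next
  assume A: "A \<in> Obj K \<and> idm K A = mzero K A A"
  have "Hom K A X = {mzero K A X}" if X: "X \<in> Obj K" for X
  proof -
    have "f = mzero K A X" if f: "f \<in> Hom K A X" for f
      using comp_id_right[OF f] comp_zero_right[OF f] A by simp
    then show ?thesis using zero_in_hom A X by blast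
  qed
  moreover have "Hom K X A = {mzero K X A}" if X: "X \<in> Obj K" for X
  proof -
    have "f = mzero K X A" if f: "f \<in> Hom K X A" for f
      using comp_id_left[OF f] comp_zero_left[OF f] A by simp
    then show ?thesis using zero_in_hom A X by blast
  qed
  ultimately show "is_zero_obj K A" using A unfolding is_zero_obj_def by blast
qed

lemma zero_obj_Obj: "is_zero_obj K Z \<Longrightarrow> Z \<in> Obj K"
  unfolding is_zero_obj_def by blast

lemma isomorphic_refl: "X \<in> Obj K \<Longrightarrow> isomorphic K X X"
  unfolding isomorphic_def is_iso_def using id_in_hom comp_id_left by blast

lemma isomorphic_sym: "isomorphic K X Y \<Longrightarrow> isomorphic K Y X"
  unfolding isomorphic_def is_iso_def by blast

lemma is_iso_comp:
  assumes f: "is_iso K f X Y" and g: "is_iso K g Y Z"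
  shows "is_iso K (cmp K g f) X Z"
proof -
  obtain f' where f: "f \<in> Hom K X Y" and f': "f' \<in> Hom K Y X"
    and ff': "cmp K f' f = idm K X" "cmp K f f' = idm K Y"
    using f unfolding is_iso_def by blast
  obtain g' where g: "g \<in> Hom K Y Z" and g': "g' \<in> Hom K Z Y"
    and gg': "cmp K g' g = idm K Y" "cmp K g g' = idm K Z"
    using g unfolding is_iso_def by blast
  have gf: "cmp K g f \<in> Hom K X Z" and f'g': "cmp K f' g' \<in> Hom K Z X"
    using comp_in_hom f f' g g' by blast+
  have "cmp K (cmp K f' g') (cmp K g f) = cmp K f' (cmp K (cmp K g' g) f)"
    using comp_assoc[OF gf g' f'] comp_assoc[OF f g g'] by simp
  also have "\<dots> = idm K X" using gg' ff' comp_id_left[OF f] by simp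
  finally have left: "cmp K (cmp K f' g') (cmp K g f) = idm K X" .
  have "cmp K (cmp K g f) (cmp K f' g') = cmp K g (cmp K (cmp K f f') g')"
    using comp_assoc[OF f'g' f g] comp_assoc[OF g' f' f] by simp
  also have "\<dots> = idm K Z" using gg' ff' comp_id_left[OF g'] by simp
  finally have right: "cmp K (cmp K g f) (cmp K f' g') = idm K Z" .
  show ?thesis unfolding is_iso_def using left right gf f'g' by blast
qed

lemma isomorphic_trans: "isomorphic K X Y \<Longrightarrow> isomorphic K Y Z \<Longrightarrow> isomorphic K X Z"
  unfolding isomorphic_def using is_iso_comp by blast

lemma is_iso_imp_isomorphic: "is_iso K f X Y \<Longrightarrow> isomorphic K X Y"
  unfolding isomorphic_def is_iso_def using hom_objs by blast

lemma zero_objs_isomorphic: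
  assumes Z: "is_zero_obj K Z" and Z': "is_zero_obj K Z'"
  shows "isomorphic K Z Z'"
proof -
  have objs: "Z \<in> Obj K" "Z' \<in> Obj K" using Z Z' by (auto dest: zero_obj_Obj)
  have zZ: "mzero K Z Z' \<in> Hom K Z Z'" and zZ': "mzero K Z' Z \<in> Hom K Z' Z"
    using zero_in_hom objs by blast+
  have "cmp K (mzero K Z' Z) (mzero K Z Z') = idm K Z"
    using zero_obj_hom_from[OF Z comp_in_hom[OF zZ zZ']] zero_obj_iff_id_eq_zero Z by simp
  moreover have "cmp K (mzero K Z Z') (mzero K Z' Z) = idm K Z'"
    using zero_obj_hom_from[OF Z' comp_in_hom[OF zZ' zZ]] zero_obj_iff_id_eq_zero Z' by simp
  ultimately show ?thesis unfolding isomorphic_def is_iso_def using objs zZ zZ' by blast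
qed

lemma isomorphic_zero_obj:
  assumes Z: "is_zero_obj K Z" and iso: "isomorphic K Z Y"
  shows "is_zero_obj K Y"
proof -
  obtain f g where f: "f \<in> Hom K Z Y" and g: "g \<in> Hom K Y Z" and fg: "cmp K f g = idm K Y"
    using iso unfolding isomorphic_def is_iso_def by blast
  have Y: "Y \<in> Obj K" using hom_objs[OF f] by blast
  have "idm K Y = mzero K Y Y"
    using fg zero_obj_hom_from[OF Z f] comp_zero_left[OF g Y] by simp
  then show ?thesis using zero_obj_iff_id_eq_zero Y by blast
qed

lemma biproduct_zero_summand:
  assumes S: "is_biproduct K A B S i1 i2 p1 p2" and Z: "is_zero_obj K S"
  shows "is_zero_obj K A"
proof -
  have A: "A \<in> Obj K" and i1: "i1 \<in> Hom K A S" and p1: "p1 \<in> Hom K S A"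
    and retract: "cmp K p1 i1 = idm K A"
    using S unfolding is_biproduct_def by auto
  have "idm K A = mzero K A A"
    using retract zero_obj_hom_from[OF Z p1] comp_zero_left[OF i1 A] by simp
  then show ?thesis using zero_obj_iff_id_eq_zero A by blast
qed

lemma shift: "shift_ok K"
  using triangulated unfolding is_triangulated_def by blast

lemma shift_obj: "X \<in> Obj K \<Longrightarrow> shO K X \<in> Obj K"
  using shift unfolding shift_ok_def by blast

lemma shift_hom: "f \<in> Hom K X Y \<Longrightarrow> shM K f \<in> Hom K (shO K X) (shO K Y)"
  using shift unfolding shift_ok_def by blast

lemma shift_id: "X \<in> Obj K \<Longrightarrow> shM K (idm K X) = idm K (shO K X)"
  using shift unfolding shift_ok_def by blast

lemma shift_add:
  "f \<in> Hom K X Y \<Longrightarrow> g \<in> Hom K X Y \<Longrightarrow> shM K (madd K f g) = madd K (shM K f) (shM K g)"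
  using shift unfolding shift_ok_def by blast

lemma shift_bij:
  "X \<in> Obj K \<Longrightarrow> Y \<in> Obj K \<Longrightarrow> bij_betw (shM K) (Hom K X Y) (Hom K (shO K X) (shO K Y))"
  using shift unfolding shift_ok_def by blast

lemma dist_tri_typed: "(X, Y, Z, f, g, h) \<in> Dist K \<Longrightarrow> tri_typed K X Y Z f g h"
  using triangulated unfolding is_triangulated_def by (elim conjE) fast

lemma dist_trivial:
  "X \<in> Obj K \<Longrightarrow> is_zero_obj K Z \<Longrightarrow> (X, X, Z, idm K X, mzero K X Z, mzero K Z (shO K X)) \<in> Dist K"
  using triangulated unfolding is_triangulated_def by (elim conjE) fast

lemma dist_rotate:
  "f \<in> Hom K X Y \<Longrightarrow> (X, Y, Z, f, g, h) \<in> Dist K \<Longrightarrow> (Y, Z, shO K X, g, h, mneg K (shM K f)) \<in> Dist K"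
  using triangulated unfolding is_triangulated_def by (elim conjE) fast

lemma dist_complete_morphism:
  "(X, Y, Z, f, g, h) \<in> Dist K \<Longrightarrow> (X', Y', Z', f', g', h') \<in> Dist K \<Longrightarrow>
   a \<in> Hom K X X' \<Longrightarrow> b \<in> Hom K Y Y' \<Longrightarrow> cmp K b f = cmp K f' a \<Longrightarrow>
   \<exists>c \<in> Hom K Z Z'. cmp K c g = cmp K g' b \<and> cmp K h' c = cmp K (shM K a) h"
  using triangulated unfolding is_triangulated_def by (elim conjE) fast

lemma shift_zero_obj_iff:
  assumes X: "X \<in> Obj K"
  shows "is_zero_obj K (shO K X) \<longleftrightarrow> is_zero_obj K X"
proof -
  have z: "mzero K X X \<in> Hom K X X" using zero_in_hom X by blast
  have inj: "inj_on (shM K) (Hom K X X)" using shift_bij[OF X X] unfolding bij_betw_def by blast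
  have "shM K (mzero K X X) = mzero K (shO K X) (shO K X)"
    using add_idem_eq_zero[OF shift_hom[OF z]] shift_add[OF z z] add_zero_zero X by simp
  then have "idm K (shO K X) = mzero K (shO K X) (shO K X) \<longleftrightarrow> idm K X = mzero K X X"
    using inj_on_eq_iff[OF inj id_in_hom[OF X] z] shift_id[OF X] by simp
  then show ?thesis using zero_obj_iff_id_eq_zero X shift_obj by blast
qed

text \<open>Rotating twice gives a triangle \<open>Z \<rightarrow> \<Sigma>X \<rightarrow> \<Sigma>Y\<close>; comparing it with the rotated trivial
  triangle \<open>Z \<rightarrow> 0 \<rightarrow> \<Sigma>Z\<close> along the identity of \<open>Z\<close> yields a map \<open>\<Sigma>Z \<rightarrow> \<Sigma>Y = 0\<close> through which
  \<open>-1\<close> on \<open>\<Sigma>Z\<close> factors.\<close>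
lemma dist_zero_obj:
  assumes D: "(X, Y, Z, f, g, h) \<in> Dist K" and X: "is_zero_obj K X" and Y: "is_zero_obj K Y"
  shows "is_zero_obj K Z"
proof -
  have f: "f \<in> Hom K X Y" and g: "g \<in> Hom K Y Z" and h: "h \<in> Hom K Z (shO K X)"
    using dist_tri_typed[OF D] unfolding tri_typed_def by auto
  have Z: "Z \<in> Obj K" using hom_objs[OF g] by blast
  have SZ: "shO K Z \<in> Obj K" using shift_obj[OF Z] .
  have SX: "is_zero_obj K (shO K X)" and SY: "is_zero_obj K (shO K Y)"
    using shift_zero_obj_iff X Y zero_obj_Obj by blast+
  obtain Z0 where Z0: "is_zero_obj K Z0" using ex_zero_obj by blast
  have Z0_obj: "Z0 \<in> Obj K" and SX_obj: "shO K X \<in> Obj K" using Z0 SX zero_obj_Obj by blast+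
  have D1: "(Z, shO K X, shO K Y, h, mneg K (shM K f), mneg K (shM K g)) \<in> Dist K"
    using dist_rotate[OF g dist_rotate[OF f D]] .
  have D0: "(Z, Z0, shO K Z, mzero K Z Z0, mzero K Z0 (shO K Z), mneg K (shM K (idm K Z))) \<in> Dist K"
    using dist_rotate[OF id_in_hom[OF Z] dist_trivial[OF Z Z0]] .
  have b: "mzero K Z0 (shO K X) \<in> Hom K Z0 (shO K X)" using zero_in_hom Z0_obj SX_obj by blast
  have square: "cmp K (mzero K Z0 (shO K X)) (mzero K Z Z0) = cmp K h (idm K Z)"
    using zero_obj_hom_to[OF SX comp_in_hom[OF zero_in_hom[OF Z Z0_obj] b]]
      zero_obj_hom_to[OF SX comp_in_hom[OF id_in_hom[OF Z] h]] by simp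
  obtain c where c: "c \<in> Hom K (shO K Z) (shO K Y)"
    and c_comm: "cmp K (mneg K (shM K g)) c = cmp K (shM K (idm K Z)) (mneg K (shM K (idm K Z)))"
    using dist_complete_morphism[OF D0 D1 id_in_hom[OF Z] b square] by blast
  have id_SZ: "idm K (shO K Z) \<in> Hom K (shO K Z) (shO K Z)" using id_in_hom[OF SZ] .
  have "mzero K (shO K Z) (shO K Z) = mneg K (idm K (shO K Z))"
    using c_comm zero_obj_hom_to[OF SY c] comp_zero_right[OF neg_in_hom[OF shift_hom[OF g]] SZ]
      shift_id[OF Z] comp_id_left[OF neg_in_hom[OF id_SZ]] by simp
  then have "idm K (shO K Z) = mzero K (shO K Z) (shO K Z)"
    using add_zero_right[OF id_SZ] add_neg_right[OF id_SZ] by simp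
  then show ?thesis using zero_obj_iff_id_eq_zero shift_zero_obj_iff Z SZ by blast
qed

end

section \<open>Thick subcategories and exact functors\<close>

definition thick_subcategory :: "('o, 'm) mdc \<Rightarrow> 'o set \<Rightarrow> bool" where
  "thick_subcategory K P \<longleftrightarrow> P \<subseteq> Obj K \<and>
     (\<exists>Z \<in> P. is_zero_obj K Z) \<and>
     (\<forall>X Y. X \<in> P \<longrightarrow> isomorphic K X Y \<longrightarrow> Y \<in> P) \<and>
     (\<forall>X \<in> Obj K. X \<in> P \<longleftrightarrow> shO K X \<in> P) \<and>
     (\<forall>X Y Z f g h. (X, Y, Z, f, g, h) \<in> Dist K \<longrightarrow> X \<in> P \<longrightarrow> Y \<in> P \<longrightarrow> Z \<in> P) \<and>
     (\<forall>A B S i1 i2 p1 p2. is_biproduct K A B S i1 i2 p1 p2 \<longrightarrow> S \<in> P \<longrightarrow> A \<in> P)"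

lemma thick_ideal_iff:
  "thick_ideal K P \<longleftrightarrow> thick_subcategory K P \<and> (\<forall>A \<in> P. \<forall>B \<in> Obj K. tenO K A B \<in> P \<and> tenO K B A \<in> P)"
  unfolding thick_ideal_def thick_subcategory_def by blast

lemma thick_subcategoryI:
  assumes "P \<subseteq> Obj K" and "\<exists>Z \<in> P. is_zero_obj K Z"
    and "\<And>X Y. X \<in> P \<Longrightarrow> isomorphic K X Y \<Longrightarrow> Y \<in> P"
    and "\<And>X. X \<in> Obj K \<Longrightarrow> shO K X \<in> P \<longleftrightarrow> X \<in> P"
    and "\<And>X Y Z f g h. (X, Y, Z, f, g, h) \<in> Dist K \<Longrightarrow> X \<in> P \<Longrightarrow> Y \<in> P \<Longrightarrow> Z \<in> P"
    and "\<And>A B S i1 i2 p1 p2. is_biproduct K A B S i1 i2 p1 p2 \<Longrightarrow> S \<in> P \<Longrightarrow> A \<in> P"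
  shows "thick_subcategory K P"
  using assms unfolding thick_subcategory_def by blast

lemma
  assumes "thick_subcategory K P"
  shows thick_subcategory_has_zero: "\<exists>Z \<in> P. is_zero_obj K Z"
    and thick_subcategory_iso: "X \<in> P \<Longrightarrow> isomorphic K X Y \<Longrightarrow> Y \<in> P"
    and thick_subcategory_shift: "X \<in> Obj K \<Longrightarrow> shO K X \<in> P \<longleftrightarrow> X \<in> P"
    and thick_subcategory_dist: "(X, Y, Z, f, g, h) \<in> Dist K \<Longrightarrow> X \<in> P \<Longrightarrow> Y \<in> P \<Longrightarrow> Z \<in> P"
    and thick_subcategory_summand: "is_biproduct K A B S i1 i2 p1 p2 \<Longrightarrow> S \<in> P \<Longrightarrow> A \<in> P"
  using assms unfolding thick_subcategory_def by blast+

lemma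
  assumes "thick_ideal K P"
  shows thick_ideal_thick_subcategory: "thick_subcategory K P"
    and thick_ideal_Obj: "P \<subseteq> Obj K"
    and thick_ideal_tensor_right: "A \<in> P \<Longrightarrow> B \<in> Obj K \<Longrightarrow> tenO K A B \<in> P"
    and thick_ideal_tensor_left: "A \<in> P \<Longrightarrow> B \<in> Obj K \<Longrightarrow> tenO K B A \<in> P"
  using assms unfolding thick_ideal_iff thick_subcategory_def by blast+

lemma thick_ideal_Union_chain:
  assumes ne: "\<C> \<noteq> {}" and ideals: "\<And>P. P \<in> \<C> \<Longrightarrow> thick_ideal K P"
    and chain: "\<And>P Q. P \<in> \<C> \<Longrightarrow> Q \<in> \<C> \<Longrightarrow> P \<subseteq> Q \<or> Q \<subseteq> P"
  shows "thick_ideal K (\<Union>\<C>)"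
  unfolding thick_ideal_iff
proof (intro conjI ballI thick_subcategoryI)
  note thick = thick_ideal_thick_subcategory[OF ideals]
  show "\<Union>\<C> \<subseteq> Obj K" using thick_ideal_Obj[OF ideals] by blast
  show "\<exists>Z \<in> \<Union>\<C>. is_zero_obj K Z" using ne thick_subcategory_has_zero[OF thick] by blast
  show "Y \<in> \<Union>\<C>" if "X \<in> \<Union>\<C>" and "isomorphic K X Y" for X Y
    using that thick_subcategory_iso[OF thick] by blast
  show "shO K X \<in> \<Union>\<C> \<longleftrightarrow> X \<in> \<Union>\<C>" if "X \<in> Obj K" for X
    using thick_subcategory_shift[OF thick that] by blast
  show "Z \<in> \<Union>\<C>" if D: "(X, Y, Z, f, g, h) \<in> Dist K" and X: "X \<in> \<Union>\<C>" and Y: "Y \<in> \<Union>\<C>"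
    for X Y Z f g h
  proof -
    obtain P Q where "P \<in> \<C>" "Q \<in> \<C>" "X \<in> P" "Y \<in> Q" using X Y by blast
    then show ?thesis using chain[of P Q] thick_subcategory_dist[OF thick D] by blast
  qed
  show "A \<in> \<Union>\<C>" if "is_biproduct K A B S i1 i2 p1 p2" and "S \<in> \<Union>\<C>" for A B S i1 i2 p1 p2
    using that thick_subcategory_summand[OF thick] by blast
  fix A B assume "A \<in> \<Union>\<C>" and "B \<in> Obj K"
  then show "tenO K A B \<in> \<Union>\<C>" and "tenO K B A \<in> \<Union>\<C>"
    using thick_ideal_tensor_right[OF ideals] thick_ideal_tensor_left[OF ideals] by blast+
qed

context triangulated_cat
begin

lemma thick_subcategory_zero_obj: "thick_subcategory K P \<Longrightarrow> is_zero_obj K Z \<Longrightarrow> Z \<in> P"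
  using thick_subcategory_has_zero thick_subcategory_iso zero_objs_isomorphic by metis

lemma thick_subcategory_iso_iff: "thick_subcategory K P \<Longrightarrow> isomorphic K X Y \<Longrightarrow> X \<in> P \<longleftrightarrow> Y \<in> P"
  using thick_subcategory_iso isomorphic_sym by metis

lemma thick_subcategory_Inter:
  assumes Q: "\<And>i. i \<in> I \<Longrightarrow> thick_subcategory K (Q i)"
  shows "thick_subcategory K {X \<in> Obj K. \<forall>i \<in> I. X \<in> Q i}"
proof (rule thick_subcategoryI)
  obtain Z where Z: "is_zero_obj K Z" using ex_zero_obj by blast
  then show "\<exists>Z \<in> {X \<in> Obj K. \<forall>i \<in> I. X \<in> Q i}. is_zero_obj K Z"
    using zero_obj_Obj thick_subcategory_zero_obj[OF Q] by blast
  show "Y \<in> {X \<in> Obj K. \<forall>i \<in> I. X \<in> Q i}"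
    if "X \<in> {X \<in> Obj K. \<forall>i \<in> I. X \<in> Q i}" and "isomorphic K X Y" for X Y
    using that thick_subcategory_iso[OF Q] unfolding isomorphic_def by blast
  show "shO K X \<in> {X \<in> Obj K. \<forall>i \<in> I. X \<in> Q i} \<longleftrightarrow> X \<in> {X \<in> Obj K. \<forall>i \<in> I. X \<in> Q i}"
    if "X \<in> Obj K" for X
    using that thick_subcategory_shift[OF Q] shift_obj by blast
  show "Z \<in> {X \<in> Obj K. \<forall>i \<in> I. X \<in> Q i}"
    if D: "(X, Y, Z, f, g, h) \<in> Dist K" and "X \<in> {X \<in> Obj K. \<forall>i \<in> I. X \<in> Q i}"
      and "Y \<in> {X \<in> Obj K. \<forall>i \<in> I. X \<in> Q i}" for X Y Z f g h
    using that thick_subcategory_dist[OF Q D] dist_tri_typed[OF D] hom_objs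
    unfolding tri_typed_def by blast
  show "A \<in> {X \<in> Obj K. \<forall>i \<in> I. X \<in> Q i}"
    if "is_biproduct K A B S i1 i2 p1 p2" and "S \<in> {X \<in> Obj K. \<forall>i \<in> I. X \<in> Q i}" for A B S i1 i2 p1 p2
    using that thick_subcategory_summand[OF Q] unfolding is_biproduct_def by blast
qed blast

end

locale exact_functor = triangulated_cat K for K :: "('o, 'm) mdc" +
  fixes F :: "'o \<Rightarrow> 'o" and Fm :: "'m \<Rightarrow> 'm"
  assumes F_obj: "X \<in> Obj K \<Longrightarrow> F X \<in> Obj K"
    and F_hom: "f \<in> Hom K X Y \<Longrightarrow> Fm f \<in> Hom K (F X) (F Y)"
    and F_id: "X \<in> Obj K \<Longrightarrow> Fm (idm K X) = idm K (F X)"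
    and F_comp: "f \<in> Hom K X Y \<Longrightarrow> g \<in> Hom K Y Z \<Longrightarrow> Fm (cmp K g f) = cmp K (Fm g) (Fm f)"
    and F_add: "f \<in> Hom K X Y \<Longrightarrow> g \<in> Hom K X Y \<Longrightarrow> Fm (madd K f g) = madd K (Fm f) (Fm g)"
    and F_shift: "X \<in> Obj K \<Longrightarrow> isomorphic K (F (shO K X)) (shO K (F X))"
    and F_dist: "(X, Y, Z, f, g, h) \<in> Dist K \<Longrightarrow> \<exists>f' g' h'. (F X, F Y, F Z, f', g', h') \<in> Dist K"
begin

lemma F_zero:
  assumes X: "X \<in> Obj K" and Y: "Y \<in> Obj K"
  shows "Fm (mzero K X Y) = mzero K (F X) (F Y)"
proof -
  have z: "mzero K X Y \<in> Hom K X Y" using zero_in_hom X Y .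
  have "madd K (Fm (mzero K X Y)) (Fm (mzero K X Y)) = Fm (mzero K X Y)"
    using F_add[OF z z] add_zero_zero X Y by simp
  then show ?thesis using add_idem_eq_zero F_hom[OF z] by blast
qed

lemma F_zero_obj: "is_zero_obj K Z \<Longrightarrow> is_zero_obj K (F Z)"
  using zero_obj_iff_id_eq_zero F_obj F_id F_zero by metis

lemma F_is_iso:
  assumes f: "is_iso K f X Y"
  shows "is_iso K (Fm f) (F X) (F Y)"
proof -
  obtain g where f: "f \<in> Hom K X Y" and g: "g \<in> Hom K Y X"
    and gf: "cmp K g f = idm K X" and fg: "cmp K f g = idm K Y"
    using f unfolding is_iso_def by blast
  have X: "X \<in> Obj K" and Y: "Y \<in> Obj K" using hom_objs[OF f] by blast+
  have "cmp K (Fm g) (Fm f) = idm K (F X)" using F_comp[OF f g] gf F_id[OF X] by simp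
  moreover have "cmp K (Fm f) (Fm g) = idm K (F Y)" using F_comp[OF g f] fg F_id[OF Y] by simp
  ultimately show ?thesis unfolding is_iso_def using F_hom[OF f] F_hom[OF g] by blast
qed

lemma F_isomorphic: "isomorphic K X Y \<Longrightarrow> isomorphic K (F X) (F Y)"
  unfolding isomorphic_def using F_is_iso F_obj by blast

lemma F_biproduct:
  assumes S: "is_biproduct K A B S i1 i2 p1 p2"
  shows "is_biproduct K (F A) (F B) (F S) (Fm i1) (Fm i2) (Fm p1) (Fm p2)"
proof -
  note S' = S[unfolded is_biproduct_def]
  have objs: "A \<in> Obj K" "B \<in> Obj K" "S \<in> Obj K" using S' by blast+
  have homs: "i1 \<in> Hom K A S" "i2 \<in> Hom K B S" "p1 \<in> Hom K S A" "p2 \<in> Hom K S B" using S' by blast+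
  have "cmp K (Fm p1) (Fm i1) = idm K (F A)" "cmp K (Fm p2) (Fm i2) = idm K (F B)"
    using F_comp[OF homs(1) homs(3)] F_comp[OF homs(2) homs(4)] F_id objs S' by simp_all
  moreover have "cmp K (Fm p2) (Fm i1) = mzero K (F A) (F B)" "cmp K (Fm p1) (Fm i2) = mzero K (F B) (F A)"
    using F_comp[OF homs(1) homs(4)] F_comp[OF homs(2) homs(3)] F_zero objs S' by simp_all
  moreover have "madd K (cmp K (Fm i1) (Fm p1)) (cmp K (Fm i2) (Fm p2)) = idm K (F S)"
    using F_comp[OF homs(3) homs(1)] F_comp[OF homs(4) homs(2)]
      F_add[OF comp_in_hom[OF homs(3) homs(1)] comp_in_hom[OF homs(4) homs(2)]] F_id[OF objs(3)] S'
    by simp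
  ultimately show ?thesis unfolding is_biproduct_def using objs homs F_obj F_hom by blast
qed

lemma thick_subcategory_preimage:
  assumes P: "thick_subcategory K P"
  shows "thick_subcategory K {X \<in> Obj K. F X \<in> P}"
proof (rule thick_subcategoryI)
  obtain Z where Z: "is_zero_obj K Z" using ex_zero_obj by blast
  then show "\<exists>Z \<in> {X \<in> Obj K. F X \<in> P}. is_zero_obj K Z"
    using zero_obj_Obj thick_subcategory_zero_obj[OF P F_zero_obj] by blast
  show "Y \<in> {X \<in> Obj K. F X \<in> P}" if "X \<in> {X \<in> Obj K. F X \<in> P}" and "isomorphic K X Y" for X Y
    using that thick_subcategory_iso[OF P] F_isomorphic unfolding isomorphic_def by blast
  show "shO K X \<in> {X \<in> Obj K. F X \<in> P} \<longleftrightarrow> X \<in> {X \<in> Obj K. F X \<in> P}" if X: "X \<in> Obj K" for X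
    using thick_subcategory_iso_iff[OF P F_shift[OF X]] thick_subcategory_shift[OF P F_obj[OF X]]
      X shift_obj by blast
  show "Z \<in> {X \<in> Obj K. F X \<in> P}"
    if D: "(X, Y, Z, f, g, h) \<in> Dist K" and "X \<in> {X \<in> Obj K. F X \<in> P}"
      and "Y \<in> {X \<in> Obj K. F X \<in> P}" for X Y Z f g h
    using that F_dist[OF D] thick_subcategory_dist[OF P] dist_tri_typed[OF D] hom_objs
    unfolding tri_typed_def by blast
  show "A \<in> {X \<in> Obj K. F X \<in> P}"
    if "is_biproduct K A B S i1 i2 p1 p2" and "S \<in> {X \<in> Obj K. F X \<in> P}" for A B S i1 i2 p1 p2
    using that F_biproduct thick_subcategory_summand[OF P] unfolding is_biproduct_def by blast
qed blast

end

section \<open>Thick ideals of a monoidal triangulated category\<close>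

locale monoidal_triangulated = triangulated_cat K for K :: "('o, 'm) mdc" +
  assumes monoidal: "is_monoidal K" and tensor_exact: "tensor_exact K"
begin

lemma unit_obj: "unitO K \<in> Obj K"
  using monoidal unfolding is_monoidal_def by blast

lemma tensor_obj: "X \<in> Obj K \<Longrightarrow> Y \<in> Obj K \<Longrightarrow> tenO K X Y \<in> Obj K"
  using monoidal unfolding is_monoidal_def by meson

lemma tensor_hom: "f \<in> Hom K X Y \<Longrightarrow> f' \<in> Hom K X' Y' \<Longrightarrow> tenM K f f' \<in> Hom K (tenO K X X') (tenO K Y Y')"
  using monoidal unfolding is_monoidal_def by meson

lemma tensor_id: "X \<in> Obj K \<Longrightarrow> Y \<in> Obj K \<Longrightarrow> tenM K (idm K X) (idm K Y) = idm K (tenO K X Y)"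
  using monoidal unfolding is_monoidal_def by meson

lemma tensor_comp:
  "f \<in> Hom K X Y \<Longrightarrow> g \<in> Hom K Y Z \<Longrightarrow> f' \<in> Hom K X' Y' \<Longrightarrow> g' \<in> Hom K Y' Z' \<Longrightarrow>
   tenM K (cmp K g f) (cmp K g' f') = cmp K (tenM K g g') (tenM K f f')"
  using monoidal unfolding is_monoidal_def by meson

lemma assoc_isomorphic:
  "A \<in> Obj K \<Longrightarrow> B \<in> Obj K \<Longrightarrow> C \<in> Obj K \<Longrightarrow>
   isomorphic K (tenO K (tenO K A B) C) (tenO K A (tenO K B C))"
  using monoidal is_iso_imp_isomorphic unfolding is_monoidal_def by meson

lemma lunit_isomorphic: "A \<in> Obj K \<Longrightarrow> isomorphic K (tenO K (unitO K) A) A"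
  using monoidal is_iso_imp_isomorphic unfolding is_monoidal_def by meson

lemma tensor_add:
  "f \<in> Hom K X Y \<Longrightarrow> f' \<in> Hom K X Y \<Longrightarrow> g \<in> Hom K X' Y' \<Longrightarrow>
   tenM K (madd K f f') g = madd K (tenM K f g) (tenM K f' g) \<and>
   tenM K g (madd K f f') = madd K (tenM K g f) (tenM K g f')"
  using tensor_exact unfolding tensor_exact_def by meson

lemma shift_tensor_isomorphic:
  "A \<in> Obj K \<Longrightarrow> X \<in> Obj K \<Longrightarrow>
   isomorphic K (tenO K (shO K X) A) (shO K (tenO K X A)) \<and>
   isomorphic K (tenO K A (shO K X)) (shO K (tenO K A X))"
  using tensor_exact is_iso_imp_isomorphic unfolding tensor_exact_def by meson

lemma dist_tensor:
  "A \<in> Obj K \<Longrightarrow> (X, Y, Z, f, g, h) \<in> Dist K \<Longrightarrow>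
   (tenO K X A, tenO K Y A, tenO K Z A, tenM K f (idm K A), tenM K g (idm K A),
      cmp K (exL K X A) (tenM K h (idm K A))) \<in> Dist K \<and>
   (tenO K A X, tenO K A Y, tenO K A Z, tenM K (idm K A) f, tenM K (idm K A) g,
      cmp K (exR K A X) (tenM K (idm K A) h)) \<in> Dist K"
  using tensor_exact unfolding tensor_exact_def by meson

lemma exact_functor_tensor_right:
  assumes B: "B \<in> Obj K"
  shows "exact_functor K (\<lambda>X. tenO K X B) (\<lambda>f. tenM K f (idm K B))"
proof unfold_locales
  have idB: "idm K B \<in> Hom K B B" using id_in_hom[OF B] .
  show "tenO K X B \<in> Obj K" if "X \<in> Obj K" for X using tensor_obj that B .
  show "tenM K f (idm K B) \<in> Hom K (tenO K X B) (tenO K Y B)" if "f \<in> Hom K X Y" for f X Y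
    using tensor_hom[OF that idB] .
  show "tenM K (idm K X) (idm K B) = idm K (tenO K X B)" if "X \<in> Obj K" for X
    using tensor_id that B .
  show "tenM K (cmp K g f) (idm K B) = cmp K (tenM K g (idm K B)) (tenM K f (idm K B))"
    if "f \<in> Hom K X Y" and "g \<in> Hom K Y Z" for f X Y g Z
    using tensor_comp[OF that idB idB] comp_id_left[OF idB] by simp
  show "tenM K (madd K f g) (idm K B) = madd K (tenM K f (idm K B)) (tenM K g (idm K B))"
    if "f \<in> Hom K X Y" and "g \<in> Hom K X Y" for f X Y g
    using tensor_add[OF that idB] by blast
  show "isomorphic K (tenO K (shO K X) B) (shO K (tenO K X B))" if "X \<in> Obj K" for X
    using shift_tensor_isomorphic[OF B that] by blast
  show "\<exists>f' g' h'. (tenO K X B, tenO K Y B, tenO K Z B, f', g', h') \<in> Dist K"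
    if "(X, Y, Z, f, g, h) \<in> Dist K" for X Y Z f g h
    using dist_tensor[OF B that] by blast
qed

lemma exact_functor_tensor_left:
  assumes B: "B \<in> Obj K"
  shows "exact_functor K (\<lambda>X. tenO K B X) (\<lambda>f. tenM K (idm K B) f)"
proof unfold_locales
  have idB: "idm K B \<in> Hom K B B" using id_in_hom[OF B] .
  show "tenO K B X \<in> Obj K" if "X \<in> Obj K" for X using tensor_obj B that .
  show "tenM K (idm K B) f \<in> Hom K (tenO K B X) (tenO K B Y)" if "f \<in> Hom K X Y" for f X Y
    using tensor_hom[OF idB that] .
  show "tenM K (idm K B) (idm K X) = idm K (tenO K B X)" if "X \<in> Obj K" for X
    using tensor_id B that .
  show "tenM K (idm K B) (cmp K g f) = cmp K (tenM K (idm K B) g) (tenM K (idm K B) f)"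
    if "f \<in> Hom K X Y" and "g \<in> Hom K Y Z" for f X Y g Z
    using tensor_comp[OF idB idB that] comp_id_left[OF idB] by simp
  show "tenM K (idm K B) (madd K f g) = madd K (tenM K (idm K B) f) (tenM K (idm K B) g)"
    if "f \<in> Hom K X Y" and "g \<in> Hom K X Y" for f X Y g
    using tensor_add[OF that idB] by blast
  show "isomorphic K (tenO K B (shO K X)) (shO K (tenO K B X))" if "X \<in> Obj K" for X
    using shift_tensor_isomorphic[OF B that] by blast
  show "\<exists>f' g' h'. (tenO K B X, tenO K B Y, tenO K B Z, f', g', h') \<in> Dist K"
    if "(X, Y, Z, f, g, h) \<in> Dist K" for X Y Z f g h
    using dist_tensor[OF B that] by blast
qed

lemma isomorphic_tensor_left: "W \<in> Obj K \<Longrightarrow> isomorphic K X Y \<Longrightarrow> isomorphic K (tenO K W X) (tenO K W Y)"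
  using exact_functor.F_isomorphic[OF exact_functor_tensor_left] by blast

lemma thick_ideal_iso_iff: "thick_ideal K P \<Longrightarrow> isomorphic K X Y \<Longrightarrow> X \<in> P \<longleftrightarrow> Y \<in> P"
  using thick_subcategory_iso_iff thick_ideal_thick_subcategory by blast

lemma thick_ideal_zero_objs: "thick_ideal K {X \<in> Obj K. is_zero_obj K X}"
  unfolding thick_ideal_iff
proof (intro conjI ballI thick_subcategoryI)
  show "\<exists>Z \<in> {X \<in> Obj K. is_zero_obj K X}. is_zero_obj K Z"
    using ex_zero_obj zero_obj_Obj by blast
  show "Y \<in> {X \<in> Obj K. is_zero_obj K X}"
    if "X \<in> {X \<in> Obj K. is_zero_obj K X}" and "isomorphic K X Y" for X Y
    using that isomorphic_zero_obj zero_obj_Obj by blast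
  show "shO K X \<in> {X \<in> Obj K. is_zero_obj K X} \<longleftrightarrow> X \<in> {X \<in> Obj K. is_zero_obj K X}"
    if "X \<in> Obj K" for X
    using that shift_zero_obj_iff shift_obj by blast
  show "Z \<in> {X \<in> Obj K. is_zero_obj K X}"
    if "(X, Y, Z, f, g, h) \<in> Dist K" and "X \<in> {X \<in> Obj K. is_zero_obj K X}"
      and "Y \<in> {X \<in> Obj K. is_zero_obj K X}" for X Y Z f g h
    using that dist_zero_obj zero_obj_Obj by blast
  show "A \<in> {X \<in> Obj K. is_zero_obj K X}"
    if "is_biproduct K A B S i1 i2 p1 p2" and "S \<in> {X \<in> Obj K. is_zero_obj K X}" for A B S i1 i2 p1 p2
    using that biproduct_zero_summand zero_obj_Obj by blast
  fix A B assume "A \<in> {X \<in> Obj K. is_zero_obj K X}" and B: "B \<in> Obj K"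
  then show "tenO K A B \<in> {X \<in> Obj K. is_zero_obj K X}" and "tenO K B A \<in> {X \<in> Obj K. is_zero_obj K X}"
    using exact_functor.F_zero_obj[OF exact_functor_tensor_right[OF B]]
      exact_functor.F_zero_obj[OF exact_functor_tensor_left[OF B]] zero_obj_Obj by auto
qed blast

lemma thick_ideal_left_residual:
  assumes P: "thick_ideal K P" and J: "J \<subseteq> Obj K"
    and J_closed: "\<And>Y C. Y \<in> J \<Longrightarrow> C \<in> Obj K \<Longrightarrow> tenO K C Y \<in> J"
  shows "thick_ideal K {X \<in> Obj K. \<forall>Y \<in> J. tenO K X Y \<in> P}"
  unfolding thick_ideal_iff
proof (intro conjI ballI)
  have "thick_subcategory K {X \<in> Obj K. tenO K X Y \<in> P}" if "Y \<in> J" for Y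
    using exact_functor.thick_subcategory_preimage[OF exact_functor_tensor_right
        thick_ideal_thick_subcategory[OF P]] that J by blast
  then have "thick_subcategory K {X \<in> Obj K. \<forall>Y \<in> J. X \<in> {X \<in> Obj K. tenO K X Y \<in> P}}"
    by (rule thick_subcategory_Inter)
  moreover have "{X \<in> Obj K. \<forall>Y \<in> J. X \<in> {X \<in> Obj K. tenO K X Y \<in> P}} =
      {X \<in> Obj K. \<forall>Y \<in> J. tenO K X Y \<in> P}" by blast
  ultimately show "thick_subcategory K {X \<in> Obj K. \<forall>Y \<in> J. tenO K X Y \<in> P}" by simp
  fix X C assume X: "X \<in> {X \<in> Obj K. \<forall>Y \<in> J. tenO K X Y \<in> P}" and C: "C \<in> Obj K"
  have "tenO K (tenO K X C) Y \<in> P" if Y: "Y \<in> J" for Y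
  proof -
    have "tenO K X (tenO K C Y) \<in> P" using X J_closed[OF Y C] by blast
    then show ?thesis using thick_ideal_iso_iff[OF P assoc_isomorphic[of X C Y]] X C Y J by blast
  qed
  then show "tenO K X C \<in> {X \<in> Obj K. \<forall>Y \<in> J. tenO K X Y \<in> P}"
    using X C tensor_obj by blast
  have "tenO K (tenO K C X) Y \<in> P" if Y: "Y \<in> J" for Y
  proof -
    have "tenO K C (tenO K X Y) \<in> P" using X Y thick_ideal_tensor_left[OF P _ C] by blast
    then show ?thesis using thick_ideal_iso_iff[OF P assoc_isomorphic[of C X Y]] X C Y J by blast
  qed
  then show "tenO K C X \<in> {X \<in> Obj K. \<forall>Y \<in> J. tenO K X Y \<in> P}"
    using X C tensor_obj by blast
qed

lemma thick_ideal_right_residual: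
  assumes P: "thick_ideal K P" and I: "I \<subseteq> Obj K"
    and I_closed: "\<And>X C. X \<in> I \<Longrightarrow> C \<in> Obj K \<Longrightarrow> tenO K X C \<in> I"
  shows "thick_ideal K {Y \<in> Obj K. \<forall>X \<in> I. tenO K X Y \<in> P}"
  unfolding thick_ideal_iff
proof (intro conjI ballI)
  have "thick_subcategory K {Y \<in> Obj K. tenO K X Y \<in> P}" if "X \<in> I" for X
    using exact_functor.thick_subcategory_preimage[OF exact_functor_tensor_left
        thick_ideal_thick_subcategory[OF P]] that I by blast
  then have "thick_subcategory K {Y \<in> Obj K. \<forall>X \<in> I. Y \<in> {Y \<in> Obj K. tenO K X Y \<in> P}}"
    by (rule thick_subcategory_Inter)
  moreover have "{Y \<in> Obj K. \<forall>X \<in> I. Y \<in> {Y \<in> Obj K. tenO K X Y \<in> P}} =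
      {Y \<in> Obj K. \<forall>X \<in> I. tenO K X Y \<in> P}" by blast
  ultimately show "thick_subcategory K {Y \<in> Obj K. \<forall>X \<in> I. tenO K X Y \<in> P}" by simp
  fix Y C assume Y: "Y \<in> {Y \<in> Obj K. \<forall>X \<in> I. tenO K X Y \<in> P}" and C: "C \<in> Obj K"
  have "tenO K X (tenO K Y C) \<in> P" if X: "X \<in> I" for X
  proof -
    have "tenO K (tenO K X Y) C \<in> P" using X Y thick_ideal_tensor_right[OF P _ C] by blast
    then show ?thesis using thick_ideal_iso_iff[OF P assoc_isomorphic[of X Y C]] X C Y I by blast
  qed
  then show "tenO K Y C \<in> {Y \<in> Obj K. \<forall>X \<in> I. tenO K X Y \<in> P}"
    using Y C tensor_obj by blast
  have "tenO K X (tenO K C Y) \<in> P" if X: "X \<in> I" for X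
  proof -
    have "tenO K (tenO K X C) Y \<in> P" using Y I_closed[OF X C] by blast
    then show ?thesis using thick_ideal_iso_iff[OF P assoc_isomorphic[of X C Y]] X C Y I by blast
  qed
  then show "tenO K C Y \<in> {Y \<in> Obj K. \<forall>X \<in> I. tenO K X Y \<in> P}"
    using Y C tensor_obj by blast
qed

lemma tpow_obj: "A \<in> Obj K \<Longrightarrow> tpow K A n \<in> Obj K"
  by (induction n) (auto simp: unit_obj tensor_obj)

lemma tpow_add_isomorphic:
  assumes A: "A \<in> Obj K"
  shows "isomorphic K (tenO K (tpow K A n) (tpow K A m)) (tpow K A (n + m))"
proof (induction n)
  case 0
  show ?case using lunit_isomorphic[OF tpow_obj[OF A]] by simp
next
  case (Suc n)
  have "isomorphic K (tenO K (tenO K A (tpow K A n)) (tpow K A m)) (tenO K A (tenO K (tpow K A n) (tpow K A m)))"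
    using assoc_isomorphic A tpow_obj by blast
  moreover have "isomorphic K (tenO K A (tenO K (tpow K A n) (tpow K A m))) (tenO K A (tpow K A (n + m)))"
    using isomorphic_tensor_left[OF A Suc] .
  ultimately show ?case using isomorphic_trans by simp
qed

end

section \<open>The prime radical and nilpotent objects\<close>

context monoidal_triangulated
begin

text \<open>As in commutative algebra: if \<open>I \<otimes> J \<subseteq> P\<close> with \<open>I, J \<nsubseteq> P\<close>, then the residuals
  \<open>Q = {X. X \<otimes> J \<subseteq> P}\<close> and \<open>R = {Y. Q \<otimes> Y \<subseteq> P}\<close> strictly contain \<open>P\<close>, so by maximality they
  contain powers \<open>A\<^sup>n\<close> and \<open>A\<^sup>m\<close>, and then \<open>A\<^sup>n\<^sup>+\<^sup>m \<cong> A\<^sup>n \<otimes> A\<^sup>m \<in> P\<close>.\<close>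
lemma prime_ideal_if_maximal_avoiding_powers:
  assumes A: "A \<in> Obj K" and P: "thick_ideal K P"
    and avoids: "\<And>n. n \<ge> 1 \<Longrightarrow> tpow K A n \<notin> P"
    and maximal: "\<And>Q. thick_ideal K Q \<Longrightarrow> \<forall>n\<ge>1. tpow K A n \<notin> Q \<Longrightarrow> P \<subseteq> Q \<Longrightarrow> Q = P"
  shows "prime_ideal K P"
proof -
  have "I \<subseteq> P \<or> J \<subseteq> P"
    if I: "thick_ideal K I" and J: "thick_ideal K J" and IJ: "ideal_tensor K I J \<subseteq> P" for I J
  proof (rule ccontr)
    assume not_sub: "\<not> (I \<subseteq> P \<or> J \<subseteq> P)"
    define Q where "Q = {X \<in> Obj K. \<forall>Y \<in> J. tenO K X Y \<in> P}"
    define R where "R = {Y \<in> Obj K. \<forall>X \<in> Q. tenO K X Y \<in> P}"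
    have Q: "thick_ideal K Q"
      unfolding Q_def by (rule thick_ideal_left_residual[OF P thick_ideal_Obj[OF J] thick_ideal_tensor_left[OF J]])
    have R: "thick_ideal K R"
      unfolding R_def by (rule thick_ideal_right_residual[OF P thick_ideal_Obj[OF Q] thick_ideal_tensor_right[OF Q]])
    have "P \<subseteq> Q"
      unfolding Q_def using thick_ideal_tensor_right[OF P] thick_ideal_Obj[OF P] thick_ideal_Obj[OF J] by blast
    moreover have "Q \<noteq> P"
      using IJ not_sub thick_ideal_Obj[OF I] unfolding Q_def ideal_tensor_def by blast
    ultimately obtain n where n: "n \<ge> 1" "tpow K A n \<in> Q" using maximal[OF Q] by blast
    have "P \<subseteq> R"
      unfolding R_def using thick_ideal_tensor_left[OF P] thick_ideal_Obj[OF P] thick_ideal_Obj[OF Q] by blast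
    moreover have "R \<noteq> P"
      using not_sub thick_ideal_Obj[OF J] unfolding R_def Q_def by blast
    ultimately obtain m where m: "m \<ge> 1" "tpow K A m \<in> R" using maximal[OF R] by blast
    have "tenO K (tpow K A n) (tpow K A m) \<in> P" using n m unfolding R_def by blast
    then have "tpow K A (n + m) \<in> P" using thick_ideal_iso_iff[OF P tpow_add_isomorphic[OF A]] by blast
    then show False using avoids n by simp
  qed
  moreover have "P \<noteq> Obj K" using avoids[of 1] tensor_obj[OF A unit_obj] by auto
  ultimately show ?thesis unfolding prime_ideal_def using P by blast
qed

lemma ex_prime_ideal_not_containing:
  assumes A: "A \<in> Obj K" and not_nilpotent: "A \<notin> nilpotent_objs K"
  shows "\<exists>P. prime_ideal K P \<and> A \<notin> P"
proof -
  define \<A> where "\<A> = {P. thick_ideal K P \<and> (\<forall>n\<ge>1. tpow K A n \<notin> P)}"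
  have "tpow K A n \<notin> {X \<in> Obj K. is_zero_obj K X}" if "n \<ge> 1" for n
  proof
    assume "tpow K A n \<in> {X \<in> Obj K. is_zero_obj K X}"
    then have "is_zero_obj K (tpow K A n) \<and> isomorphic K (tpow K A n) (tpow K A n)"
      using isomorphic_refl by blast
    then show False using not_nilpotent A that unfolding nilpotent_objs_def by blast
  qed
  then have zero_objs: "{X \<in> Obj K. is_zero_obj K X} \<in> \<A>"
    unfolding \<A>_def using thick_ideal_zero_objs by blast
  have chains: "\<Union>\<C> \<in> \<A>" if "\<C> \<noteq> {}" and "subset.chain \<A> \<C>" for \<C>
  proof -
    have sub: "\<C> \<subseteq> \<A>" and chain: "\<And>P Q. P \<in> \<C> \<Longrightarrow> Q \<in> \<C> \<Longrightarrow> P \<subseteq> Q \<or> Q \<subseteq> P"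
      using that(2) unfolding subset_chain_def by blast+
    have "thick_ideal K (\<Union>\<C>)"
      using thick_ideal_Union_chain[OF that(1) _ chain] sub unfolding \<A>_def by blast
    then show ?thesis using sub unfolding \<A>_def by blast
  qed
  obtain P where "P \<in> \<A>" and maximal_in: "\<forall>Q \<in> \<A>. P \<subseteq> Q \<longrightarrow> Q = P"
    using subset_Zorn_nonempty[OF _ chains] zero_objs by blast
  then have P: "thick_ideal K P" and avoids: "\<And>n. n \<ge> 1 \<Longrightarrow> tpow K A n \<notin> P"
    unfolding \<A>_def by blast+
  have maximal: "Q = P" if "thick_ideal K Q" and "\<forall>n\<ge>1. tpow K A n \<notin> Q" and "P \<subseteq> Q" for Q
    using maximal_in that unfolding \<A>_def by blast
  have "prime_ideal K P"
    using prime_ideal_if_maximal_avoiding_powers[OF A P avoids maximal] .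
  moreover have "A \<notin> P"
    using avoids[of 1] thick_ideal_tensor_right[OF P _ unit_obj] by auto
  ultimately show ?thesis by blast
qed

lemma prime_radical_subset_nilpotent_objs: "prime_radical K \<subseteq> nilpotent_objs K"
  unfolding prime_radical_def using ex_prime_ideal_not_containing by blast

end

section \<open>Completely prime ideals\<close>

context monoidal_triangulated
begin

lemma unit_notin_proper_thick_ideal:
  assumes P: "thick_ideal K P" and proper: "P \<noteq> Obj K"
  shows "unitO K \<notin> P"
proof
  assume "unitO K \<in> P"
  then have "B \<in> P" if "B \<in> Obj K" for B
    using thick_ideal_tensor_right[OF P _ that] thick_ideal_iso_iff[OF P lunit_isomorphic[OF that]] by blast
  then show False using proper thick_ideal_Obj[OF P] by blast
qed

lemma completely_prime_ideal_tpow: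
  assumes P: "completely_prime_ideal K P" and A: "A \<in> Obj K"
  shows "n \<ge> 1 \<Longrightarrow> tpow K A n \<in> P \<Longrightarrow> A \<in> P"
proof (induction n)
  case 0
  then show ?case by simp
next
  case (Suc n)
  have "A \<in> P \<or> tpow K A n \<in> P"
    using Suc.prems(2) P A tpow_obj[OF A] unfolding completely_prime_ideal_def by simp
  moreover have "tpow K A 0 \<notin> P"
    using P unit_notin_proper_thick_ideal unfolding completely_prime_ideal_def by simp
  ultimately show ?case using Suc.IH by (cases n) auto
qed

lemma nilpotent_objs_subset_cp_radical: "nilpotent_objs K \<subseteq> cp_radical K"
proof
  fix A assume "A \<in> nilpotent_objs K"
  then obtain n Z where A: "A \<in> Obj K" and n: "n \<ge> 1" and Z: "is_zero_obj K Z"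
    and nil: "isomorphic K (tpow K A n) Z"
    unfolding nilpotent_objs_def by blast
  have "A \<in> P" if P: "completely_prime_ideal K P" for P
  proof -
    have ideal: "thick_ideal K P" using P unfolding completely_prime_ideal_def by blast
    have "Z \<in> P" using thick_subcategory_zero_obj[OF thick_ideal_thick_subcategory[OF ideal] Z] .
    then have "tpow K A n \<in> P" using thick_ideal_iso_iff[OF ideal nil] by blast
    then show ?thesis using completely_prime_ideal_tpow[OF P A n] by blast
  qed
  then show "A \<in> cp_radical K" unfolding cp_radical_def using A by blast
qed

lemma braiding_isomorphic:
  "is_symmetric K br \<Longrightarrow> A \<in> Obj K \<Longrightarrow> B \<in> Obj K \<Longrightarrow> isomorphic K (tenO K A B) (tenO K B A)"
  unfolding is_symmetric_def using is_iso_imp_isomorphic by blast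

text \<open>For \<open>A \<otimes> B \<in> P\<close> the braiding makes \<open>I = {X. X \<otimes> B \<in> P}\<close> an ideal; primality applied to
  \<open>I \<otimes> {Y. I \<otimes> Y \<subseteq> P} \<subseteq> P\<close> puts \<open>A \<in> I\<close> or \<open>B\<close> into \<open>P\<close>.\<close>
lemma completely_prime_if_prime:
  assumes br: "is_symmetric K br" and P: "prime_ideal K P"
  shows "completely_prime_ideal K P"
proof -
  have ideal: "thick_ideal K P" and proper: "P \<noteq> Obj K"
    and prime: "\<And>I J. thick_ideal K I \<Longrightarrow> thick_ideal K J \<Longrightarrow> ideal_tensor K I J \<subseteq> P \<Longrightarrow> I \<subseteq> P \<or> J \<subseteq> P"
    using P unfolding prime_ideal_def by blast+
  have "A \<in> P \<or> B \<in> P" if A: "A \<in> Obj K" and B: "B \<in> Obj K" and AB: "tenO K A B \<in> P" for A B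
  proof -
    define I where "I = {X \<in> Obj K. tenO K X B \<in> P}"
    have "thick_subcategory K I"
      unfolding I_def using exact_functor.thick_subcategory_preimage[OF exact_functor_tensor_right[OF B]
        thick_ideal_thick_subcategory[OF ideal]] .
    moreover have "tenO K X C \<in> I \<and> tenO K C X \<in> I" if X: "X \<in> I" and C: "C \<in> Obj K" for X C
    proof
      have X_obj: "X \<in> Obj K" and XB: "tenO K X B \<in> P" using X unfolding I_def by blast+
      have "isomorphic K (tenO K (tenO K X C) B) (tenO K X (tenO K B C))"
        using isomorphic_trans[OF assoc_isomorphic[OF X_obj C B]
            isomorphic_tensor_left[OF X_obj braiding_isomorphic[OF br C B]]] .
      moreover have "tenO K X (tenO K B C) \<in> P"
        using thick_ideal_iso_iff[OF ideal assoc_isomorphic[OF X_obj B C]]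
          thick_ideal_tensor_right[OF ideal XB C] by blast
      ultimately show "tenO K X C \<in> I"
        unfolding I_def using thick_ideal_iso_iff[OF ideal] tensor_obj X_obj C by blast
      have "tenO K C (tenO K X B) \<in> P" using thick_ideal_tensor_left[OF ideal XB C] .
      then show "tenO K C X \<in> I"
        unfolding I_def using thick_ideal_iso_iff[OF ideal assoc_isomorphic[OF C X_obj B]] tensor_obj X_obj C
        by blast
    qed
    ultimately have I: "thick_ideal K I" unfolding thick_ideal_iff by blast
    have I_obj: "I \<subseteq> Obj K" unfolding I_def by blast
    define J where "J = {Y \<in> Obj K. \<forall>X \<in> I. tenO K X Y \<in> P}"
    have J: "thick_ideal K J"
      unfolding J_def by (rule thick_ideal_right_residual[OF ideal I_obj thick_ideal_tensor_right[OF I]])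
    have "ideal_tensor K I J \<subseteq> P" unfolding ideal_tensor_def J_def by blast
    then have "I \<subseteq> P \<or> J \<subseteq> P" using prime[OF I J] by blast
    moreover have "A \<in> I" and "B \<in> J" unfolding I_def J_def using A B AB by blast+
    ultimately show ?thesis by blast
  qed
  then show ?thesis unfolding completely_prime_ideal_def using ideal proper by blast
qed

lemma cp_radical_subset_prime_radical: "is_symmetric K br \<Longrightarrow> cp_radical K \<subseteq> prime_radical K"
  unfolding cp_radical_def prime_radical_def using completely_prime_if_prime by blast

end

theorem mainTheorem13:
  fixes K :: "('o, 'm) mdc"
  assumes "is_MDC K"
  shows "prime_radical K \<subseteq> nilpotent_objs K \<and>
         ((\<exists>P. completely_prime_ideal K P) \<longrightarrow>
            prime_radical K \<subseteq> nilpotent_objs K \<and> nilpotent_objs K \<subseteq> cp_radical K) \<and>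
         ((\<exists>br. is_symmetric K br) \<longrightarrow>
            prime_radical K = nilpotent_objs K \<and> nilpotent_objs K = cp_radical K)"
proof -
  interpret monoidal_triangulated K
    using assms by unfold_locales (simp_all add: is_MDC_def)
  show ?thesis
    using prime_radical_subset_nilpotent_objs nilpotent_objs_subset_cp_radical
      cp_radical_subset_prime_radical by blast
qed

end
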